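(* Let $r\ge 1$ and $m\ge 0$ be integers. Then for every integer $k\ge 0$, $$(-1)^{\binom{r}{2}}\det\left(\binom{k+i+j}{m+r-1}\right)_{i,j=0}^{r-1}=\left\langle \begin{matrix} k\\ m\end{matrix}\right\rangle_r .$$ Equivalently, the matrix $\left((-1)^{\binom r2}\det\left(\binom{k+i+j}{m+r-1}\right)_{i,j=0}^{r-1}\right)_{k,m\ge 0}$ equals the $r$-Hoggatt matrix $\left(\left\langle \begin{smallmatrix} k\\ m\end{smallmatrix}\right\rangle_r\right)_{k,m\ge0}$.
   Context: For an integer $x$ and integer $r>0$ the rising factorial is $x^{(r)}=x(x+1)\cdots(x+r-1)$, with $x^{(0)}=1$. For a positive integer $r$ and integers $n,k$ the $r$-Hoggatt binomial is defined by $$\left\langle \begin{matrix} n\\ k\end{matrix}\right\rangle_r=\prod_{j=1}^{k}\frac{(n-k+j)^{(r)}}{(j)^{(r)}}\quad\text{for }0\le k\le n,$$ (an empty product being $1$), and $\left\langle \begin{smallmatrix} n\\ k\end{smallmatrix}\right\rangle_r=0$ otherwise. Binomial coefficients $\binom{a}{b}$ for integers $a\ge0$, $b\ge 0$ are the usual ones (zero if $b>a$). *)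

theory Defs
  imports Main "Jordan_Normal_Form.Determinant"
begin

text \<open>Rising factorial x^(r) = x(x+1)...(x+r-1) is the library's pochhammer.
  The r-Hoggatt binomial, defined for integers n, k; valued in the rationals
  (it is an integer, but the defining formula is a quotient).\<close>

definition hoggatt :: "nat \<Rightarrow> int \<Rightarrow> int \<Rightarrow> rat" where
  "hoggatt r n k =
     (if 0 \<le> k \<and> k \<le> n then
        (\<Prod>j\<in>{1..nat k}. pochhammer (of_int (n - k + int j)) r / pochhammer (of_nat j) r)
      else 0)"

end

theory Submission
  imports Defs
begin

text \<open>Vandermonde's convolution in the row index factors the Hankel matrix
  \<open>(C(k+i+j, m+r-1))\<close> as the unitriangular Pascal matrix \<open>(C(i,l))\<close> times the
  row reversal of \<open>A = (C(k+j, m+i))\<close>, so its determinant is \<open>(-1)^C(r,2) det A\<close>.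
  Since \<open>C(k+j, m+i) C(m+i, m) = C(k+j, m) C(k-m+j, i)\<close>, rescaling rows and columns turns
  \<open>A\<close> into \<open>(C(k-m+j, i))\<close>, which by Vandermonde again is a product of two
  unitriangular matrices; hence \<open>det A = \<Prod>\<^sub>j C(k+j, m) / C(m+j, m)\<close>.
  Transposing the double product of rising factorials in the Hoggatt binomial gives the same value.\<close>

lemma det_mat_scaled:
  fixes f :: "nat \<Rightarrow> nat \<Rightarrow> 'a::comm_ring_1"
  shows "det (mat n n (\<lambda>(i,j). a i * b j * f i j))
       = prod a {0..<n} * prod b {0..<n} * det (mat n n (\<lambda>(i,j). f i j))"
proof -
  have "signof p * (\<Prod>i = 0..<n. mat n n (\<lambda>(i,j). a i * b j * f i j) $$ (i, p i))
      = prod a {0..<n} * prod b {0..<n} * (signof p * (\<Prod>i = 0..<n. mat n n (\<lambda>(i,j). f i j) $$ (i, p i)))"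
    if p: "p permutes {0..<n}" for p
  proof -
    have "p i < n" if "i < n" for i using permutes_in_image[OF p] that by simp
    hence "(\<Prod>i = 0..<n. mat n n (\<lambda>(i,j). a i * b j * f i j) $$ (i, p i))
        = prod a {0..<n} * (\<Prod>i = 0..<n. b (p i)) * (\<Prod>i = 0..<n. mat n n (\<lambda>(i,j). f i j) $$ (i, p i))"
      by (simp add: prod.distrib)
    also have "(\<Prod>i = 0..<n. b (p i)) = prod b {0..<n}" using prod.permute[OF p, of b] by simp
    finally show ?thesis by (simp add: ac_simps)
  qed
  then show ?thesis by (simp add: det_def'[of _ n] sum_distrib_left)
qed

lemma det_unit_lower_triangular:
  fixes A :: "'a::comm_ring_1 mat"
  assumes "A \<in> carrier_mat n n" and "\<And>i j. i < j \<Longrightarrow> j < n \<Longrightarrow> A $$ (i,j) = 0"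
    and "\<And>i. i < n \<Longrightarrow> A $$ (i,i) = 1"
  shows "det A = 1"
  using det_lower_triangular[of n A] assms by (simp add: prod_list_diag_prod)

lemma det_unit_upper_triangular:
  fixes A :: "'a::comm_ring_1 mat"
  assumes "A \<in> carrier_mat n n" and "\<And>i j. j < i \<Longrightarrow> i < n \<Longrightarrow> A $$ (i,j) = 0"
    and "\<And>i. i < n \<Longrightarrow> A $$ (i,i) = 1"
  shows "det A = 1"
  using det_upper_triangular[of A n] assms by (simp add: prod_list_diag_prod upper_triangular_def)

lemma det_zero_col:
  fixes A :: "'a::comm_ring_1 mat"
  assumes A: "A \<in> carrier_mat n n" and j: "j < n" and "\<And>i. i < n \<Longrightarrow> A $$ (i,j) = 0"
  shows "det A = 0"
  using laplace_expansion_column[OF A j] assms by simp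

definition reversal_mat :: "nat \<Rightarrow> 'a::{zero,one} mat" where
  "reversal_mat n = mat n n (\<lambda>(i,j). if i + j = n - 1 then 1 else 0)"

lemma reversal_mat_carrier [simp]: "reversal_mat n \<in> carrier_mat n n"
  by (simp add: reversal_mat_def)

lemma reversal_mat_mult:
  fixes A :: "'a::semiring_1 mat"
  assumes "A \<in> carrier_mat n nc"
  shows "reversal_mat n * A = mat n nc (\<lambda>(i,j). A $$ (n - 1 - i, j))"
proof (rule eq_matI)
  fix i j assume "i < dim_row (mat n nc (\<lambda>(i,j). A $$ (n - 1 - i, j)))"
    and "j < dim_col (mat n nc (\<lambda>(i,j). A $$ (n - 1 - i, j)))"
  hence i: "i < n" and j: "j < nc" by auto
  have "(reversal_mat n * A) $$ (i,j) = (\<Sum>t<n. (if t = n - 1 - i then 1 else 0) * A $$ (t,j))"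
    using assms i j unfolding reversal_mat_def
    by (auto simp: scalar_prod_def atLeast0LessThan intro!: sum.cong)
  also have "\<dots> = (\<Sum>t<n. if t = n - 1 - i then A $$ (t,j) else 0)"
    by (rule sum.cong) auto
  also have "\<dots> = A $$ (n - 1 - i, j)" using i by simp
  finally show "(reversal_mat n * A) $$ (i,j) = mat n nc (\<lambda>(i,j). A $$ (n - 1 - i, j)) $$ (i,j)"
    using i j by simp
qed (use assms in \<open>auto simp: reversal_mat_def\<close>)

lemma det_reversal_mat: "det (reversal_mat n :: 'a::comm_ring_1 mat) = (-1) ^ (n choose 2)"
proof (induction n)
  case 0
  show ?case by (simp add: reversal_mat_def numeral_2_eq_2)
next
  case (Suc n)
  let ?R = "reversal_mat (Suc n) :: 'a mat"
  have minor: "mat_delete ?R 0 n = reversal_mat n"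
    unfolding mat_delete_def reversal_mat_def by (rule eq_matI) auto
  have "det ?R = (\<Sum>i<Suc n. ?R $$ (i,n) * cofactor ?R i n)"
    by (rule laplace_expansion_column) auto
  also have "\<dots> = (\<Sum>i<Suc n. if i = 0 then cofactor ?R 0 n else 0)"
    by (rule sum.cong) (auto simp: reversal_mat_def)
  also have "\<dots> = (-1) ^ n * (-1) ^ (n choose 2)"
    unfolding cofactor_def minor using Suc.IH by (simp add: numeral_2_eq_2)
  also have "\<dots> = (-1) ^ (Suc n choose 2)"
    by (simp add: numeral_2_eq_2 power_add)
  finally show ?case .
qed

lemma vandermonde_lessThan:
  assumes "a < s"
  shows "(\<Sum>l<s. if l \<le> n then (a choose l) * (b choose (n - l)) else 0) = (a + b) choose n"
proof -
  have "(\<Sum>l<s. if l \<le> n then (a choose l) * (b choose (n - l)) else 0)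
      = (\<Sum>l\<in>{..<s} \<inter> {..n}. (a choose l) * (b choose (n - l)))"
    by (simp add: sum.inter_restrict)
  also have "\<dots> = (\<Sum>l\<le>n. (a choose l) * (b choose (n - l)))"
    using assms by (intro sum.mono_neutral_left) auto
  finally show ?thesis by (simp add: vandermonde)
qed

lemma binomial_hankel_factorization:
  "mat r r (\<lambda>(i,j). of_nat ((i + c j) choose (m + r - 1)))
     = mat r r (\<lambda>(i,l). of_nat (i choose l))
       * (reversal_mat r * mat r r (\<lambda>(i,j). of_nat (c j choose (m + i))) :: 'a::semiring_1 mat)"
  (is "?M = ?P * (reversal_mat r * ?A)")
proof -
  have "reversal_mat r * ?A = mat r r (\<lambda>(l,j). of_nat (c j choose (m + r - 1 - l)))"
    by (rule trans[OF reversal_mat_mult]) (auto intro!: eq_matI simp: add.commute)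
  moreover have "?M = ?P * mat r r (\<lambda>(l,j). of_nat (c j choose (m + r - 1 - l)))"
  proof (rule eq_matI)
    fix i j assume "i < dim_row (?P * mat r r (\<lambda>(l,j). of_nat (c j choose (m + r - 1 - l))))"
      and "j < dim_col (?P * mat r r (\<lambda>(l,j). of_nat (c j choose (m + r - 1 - l))))"
    hence i: "i < r" and j: "j < r" by simp_all
    have "(?P * mat r r (\<lambda>(l,j). of_nat (c j choose (m + r - 1 - l)))) $$ (i,j)
        = of_nat (\<Sum>l<r. if l \<le> m + r - 1 then (i choose l) * (c j choose (m + r - 1 - l)) else 0)"
      using i j by (auto simp: scalar_prod_def atLeast0LessThan intro!: sum.cong)
    also have "\<dots> = of_nat ((i + c j) choose (m + r - 1))" using i by (simp only: vandermonde_lessThan)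
    finally show "?M $$ (i,j) = (?P * mat r r (\<lambda>(l,j). of_nat (c j choose (m + r - 1 - l)))) $$ (i,j)"
      using i j by simp
  qed simp_all
  ultimately show ?thesis by simp
qed

lemma det_pascal_mat: "det (mat r r (\<lambda>(i,l). of_nat (i choose l)) :: 'a::comm_ring_1 mat) = 1"
  by (rule det_unit_lower_triangular) (auto simp: binomial_eq_0)

lemma det_binomial_hankel:
  "det (mat r r (\<lambda>(i,j). of_nat ((i + c j) choose (m + r - 1))) :: 'a::comm_ring_1 mat)
     = (-1) ^ (r choose 2) * det (mat r r (\<lambda>(i,j). of_nat (c j choose (m + i))))"
proof -
  let ?A = "mat r r (\<lambda>(i,j). of_nat (c j choose (m + i))) :: 'a mat"
  have "reversal_mat r * ?A \<in> carrier_mat r r"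
    using mult_carrier_mat[OF reversal_mat_carrier, of ?A r] by simp
  then show ?thesis
    unfolding binomial_hankel_factorization
    by (simp add: det_mult[of _ r] det_pascal_mat det_reversal_mat)
qed

lemma det_binomial_shift_mat: "det (mat r r (\<lambda>(i,j). of_nat ((x + j) choose i)) :: 'a::comm_ring_1 mat) = 1"
proof -
  let ?L = "mat r r (\<lambda>(i,l). if l \<le> i then of_nat (x choose (i - l)) else 0) :: 'a mat"
  let ?U = "mat r r (\<lambda>(l,j). of_nat (j choose l)) :: 'a mat"
  have "mat r r (\<lambda>(i,j). of_nat ((x + j) choose i)) = ?L * ?U"
  proof (rule eq_matI)
    fix i j assume "i < dim_row (?L * ?U)" and "j < dim_col (?L * ?U)"
    hence i: "i < r" and j: "j < r" by simp_all
    have "(?L * ?U) $$ (i,j) = of_nat (\<Sum>l<r. if l \<le> i then (j choose l) * (x choose (i - l)) else 0)"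
      using i j by (auto simp: scalar_prod_def atLeast0LessThan intro!: sum.cong)
    also have "\<dots> = of_nat ((j + x) choose i)" using j by (simp only: vandermonde_lessThan)
    finally show "mat r r (\<lambda>(i,j). of_nat ((x + j) choose i)) $$ (i,j) = (?L * ?U) $$ (i,j)"
      using i j by (simp add: add.commute)
  qed simp_all
  moreover have "det ?L = 1" by (rule det_unit_lower_triangular) auto
  moreover have "det ?U = 1" by (rule det_unit_upper_triangular) (auto simp: binomial_eq_0)
  ultimately show ?thesis by (simp add: det_mult[of _ r])
qed

lemma det_binomial_mat:
  assumes "m \<le> k"
  shows "det (mat r r (\<lambda>(i,j). of_nat ((k + j) choose (m + i))) :: 'a::field_char_0 mat)
       = (\<Prod>j<r. of_nat ((k + j) choose m) / of_nat ((m + j) choose m))"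
proof -
  have "((k + j) choose (m + i)) * ((m + i) choose m) = ((k + j) choose m) * ((k - m + j) choose i)" for i j
  proof (cases "m + i \<le> k + j")
    case True
    then show ?thesis using choose_mult[of m "m + i" "k + j"] assms by simp
  next
    case False
    then show ?thesis using assms by (simp add: binomial_eq_0)
  qed
  hence "(of_nat ((k + j) choose (m + i)) :: 'a)
      = 1 / of_nat ((m + i) choose m) * of_nat ((k + j) choose m) * of_nat ((k - m + j) choose i)" for i j
    by (simp add: field_simps flip: of_nat_mult)
  hence "det (mat r r (\<lambda>(i,j). of_nat ((k + j) choose (m + i))) :: 'a mat)
      = det (mat r r (\<lambda>(i,j). 1 / of_nat ((m + i) choose m) * of_nat ((k + j) choose m)
                               * of_nat ((k - m + j) choose i)))"
    by simp
  also have "\<dots> = (\<Prod>i = 0..<r. 1 / of_nat ((m + i) choose m)) * (\<Prod>j = 0..<r. of_nat ((k + j) choose m))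
                   * det (mat r r (\<lambda>(i,j). of_nat ((k - m + j) choose i)))"
    by (rule det_mat_scaled)
  also have "\<dots> = (\<Prod>j<r. of_nat ((k + j) choose m) / of_nat ((m + j) choose m))"
    unfolding det_binomial_shift_mat atLeast0LessThan mult_1_right prod.distrib[symmetric]
    by (simp add: divide_inverse mult.commute)
  finally show ?thesis .
qed

lemma prod_pochhammer_transpose:
  fixes a :: "'a::comm_semiring_1"
  shows "(\<Prod>j = 1..m. pochhammer (a + of_nat j) r) = (\<Prod>t<r. pochhammer (a + of_nat t + 1) m)"
proof -
  have "(\<Prod>j = 1..m. pochhammer (a + of_nat j) r) = (\<Prod>s<m. \<Prod>t<r. a + of_nat s + of_nat t + 1)"
    by (simp add: prod.atLeast1_atMost_eq pochhammer_prod atLeast0LessThan ac_simps)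
  also have "\<dots> = (\<Prod>t<r. \<Prod>s<m. a + of_nat s + of_nat t + 1)" by (rule prod.swap)
  also have "\<dots> = (\<Prod>t<r. pochhammer (a + of_nat t + 1) m)"
    by (simp add: pochhammer_prod atLeast0LessThan ac_simps)
  finally show ?thesis .
qed

lemma binomial_eq_pochhammer:
  "(of_nat ((c + m) choose m) :: 'a::field_char_0) = pochhammer (of_nat c + 1) m / fact m"
  by (simp add: binomial_gbinomial gbinomial_pochhammer')

lemma hoggatt_eq_prod_binomial:
  assumes "m \<le> k"
  shows "hoggatt r (int k) (int m) = (\<Prod>t<r. of_nat ((k + t) choose m) / of_nat ((m + t) choose m))"
proof -
  define x where "x = k - m"
  have "hoggatt r (int k) (int m)
      = (\<Prod>j = 1..m. pochhammer (of_nat x + of_nat j) r / pochhammer (0 + of_nat j) r)"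
    \<comment> \<open>the summand \<open>0\<close> lets \<open>prod_pochhammer_transpose\<close> apply to the denominator\<close>
    using assms by (auto simp: hoggatt_def x_def of_nat_diff intro!: prod.cong)
  also have "\<dots> = (\<Prod>t<r. pochhammer (of_nat x + of_nat t + 1) m / pochhammer (0 + of_nat t + 1) m)"
    by (simp only: prod_dividef prod_pochhammer_transpose)
  also have "\<dots> = (\<Prod>t<r. of_nat ((k + t) choose m) / of_nat ((m + t) choose m))"
  proof (rule prod.cong[OF refl])
    fix t
    have "k + t = (x + t) + m" and "m + t = t + m" using assms by (simp_all add: x_def)
    then show "pochhammer (of_nat x + of_nat t + 1) m / pochhammer (0 + of_nat t + 1) m
             = (of_nat ((k + t) choose m) / of_nat ((m + t) choose m) :: rat)"
      by (simp only: binomial_eq_pochhammer) simp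
  qed
  finally show ?thesis .
qed

lemma det_binomial_mat_eq_hoggatt:
  assumes "r \<ge> 1"
  shows "det (mat r r (\<lambda>(i,j). of_nat ((k + j) choose (m + i))) :: rat mat) = hoggatt r (int k) (int m)"
proof (cases "m \<le> k")
  case True
  then show ?thesis by (simp add: det_binomial_mat hoggatt_eq_prod_binomial)
next
  case False
  have "det (mat r r (\<lambda>(i,j). of_nat ((k + j) choose (m + i))) :: rat mat) = 0"
    by (rule det_zero_col[of _ r 0]) (use assms False in \<open>auto simp: binomial_eq_0\<close>)
  then show ?thesis using False by (simp add: hoggatt_def)
qed

theorem theorem1:
  fixes r m k :: nat
  assumes "r \<ge> 1"
  shows "of_int ((-1) ^ (r choose 2) *
           det (mat r r (\<lambda>(i, j). int ((k + i + j) choose (m + r - 1)))))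
         = hoggatt r (int k) (int m)"
proof -
  let ?A = "mat r r (\<lambda>(i,j). of_nat ((k + j) choose (m + i)))"
  have "det (mat r r (\<lambda>(i, j). int ((k + i + j) choose (m + r - 1)))) = (-1) ^ (r choose 2) * det ?A"
    using det_binomial_hankel[of r "\<lambda>j. k + j" m] by (simp add: ac_simps)
  hence "(-1) ^ (r choose 2) * det (mat r r (\<lambda>(i, j). int ((k + i + j) choose (m + r - 1)))) = det ?A"
    by (simp flip: power_add)
  moreover have "map_mat of_int ?A = (?A :: rat mat)" by (rule eq_matI) auto
  ultimately show ?thesis
    using det_binomial_mat_eq_hoggatt[OF assms] by (metis of_int_hom.hom_det)
qed

end
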